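(* Let $(\mathcal{A},\{\mu_n\}_{n\ge1})$ be an $A_\infty$-algebra and $(\mathcal{M},\{\nu_n\}_{n\ge1})$ a representation of it. A degree $0$ linear map $\mathcal{R}:\mathcal{M}\to\mathcal{A}$ is a strict homotopy relative Rota–Baxter operator if and only if the map $\widetilde{\mathcal{R}}:\mathcal{A}\oplus\mathcal{M}\to\mathcal{A}\oplus\mathcal{M}$, $\widetilde{\mathcal{R}}(a,u)=(\mathcal{R}(u),0)$, is a strict homotopy Nijenhuis operator on the semidirect product $A_\infty$-algebra $(\mathcal{A}\oplus\mathcal{M},\{\mu_n^\ltimes\}_{n\ge1})$.
   Context: Over a field of characteristic $0$. An $A_\infty$-algebra is a graded vector space $\mathcal{A}=\bigoplus_{i\in\mathbb{Z}}\mathcal{A}_i$ with graded linear maps $\mu_n:\mathcal{A}^{\otimes n}\to\mathcal{A}$ of degree $n-2$ such that for each $k\ge1$ and homogeneous $a_1,\dots,a_k$: $\sum_{m+n=k+1}\sum_{i=1}^m(-1)^{i(n+1)+n(|a_1|+\cdots+|a_{i-1}|)}\mu_m(a_1,\dots,a_{i-1},\mu_n(a_i,\dots,a_{i+n-1}),a_{i+n},\dots,a_k)=0$. A representation is a graded vector space $\mathcal{M}$ with maps $\nu_n:\bigoplus_{r=1}^n(\mathcal{A}^{\otimes r-1}\otimes\mathcal{M}\otimes\mathcal{A}^{\otimes n-r})\to\mathcal{M}$ of degree $n-2$ satisfying the same identities whenever exactly one argument lies in $\mathcal{M}$ (with the operations applied to an argument containing that element replaced by $\nu$). The semidirect product is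 $\mu_n^\ltimes((a_1,u_1),\dots,(a_n,u_n))=(\mu_n(a_1,\dots,a_n),\sum_{r=1}^n\nu_n(a_1,\dots,u_r,\dots,a_n))$, an $A_\infty$-algebra. A degree $0$ map $\mathcal{R}:\mathcal{M}\to\mathcal{A}$ is a strict homotopy relative Rota–Baxter operator if $\mu_n(\mathcal{R}u_1,\dots,\mathcal{R}u_n)=\sum_{r=1}^n\mathcal{R}(\nu_n(\mathcal{R}u_1,\dots,u_r,\dots,\mathcal{R}u_n))$ for all $n\ge1$ and homogeneous $u_i$. On an $A_\infty$-algebra $(\mathcal{B},\{m_n\})$ a degree $0$ linear map $\mathcal{N}$ is a strict homotopy Nijenhuis operator if for all $n\ge1$ and homogeneous $b_1,\dots,b_n$: $m_n(\mathcal{N}b_1,\dots,\mathcal{N}b_n)=\sum_{k=1}^n(-1)^{k-1}\mathcal{N}^k\Big(\sum_{S\subseteq\{1..n\},|S|=k}m_n(c^S_1,\dots,c^S_n)\Big)$ where $c^S_i=b_i$ if $i\in S$ and $c^S_i=\mathcal{N}(b_i)$ if $i\notin S$. *)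

theory Defs
  imports Complex_Main "HOL-Library.Product_Plus"
begin

definition graded_vs :: "('k::field \<Rightarrow> 'a::ab_group_add \<Rightarrow> 'a) \<Rightarrow> (int \<Rightarrow> 'a set) \<Rightarrow> bool" where
  "graded_vs s G \<longleftrightarrow>
     Vector_Spaces.vector_space s \<and>
     (\<forall>i. 0 \<in> G i \<and> (\<forall>x\<in>G i. \<forall>y\<in>G i. x + y \<in> G i) \<and> (\<forall>c. \<forall>x\<in>G i. s c x \<in> G i)) \<and>
     (\<forall>x. \<exists>f. finite {i. f i \<noteq> 0} \<and> (\<forall>i. f i \<in> G i) \<and> x = (\<Sum>i\<in>{i. f i \<noteq> 0}. f i)) \<and>
     (\<forall>f. finite {i. f i \<noteq> 0} \<and> (\<forall>i. f i \<in> G i) \<and> (\<Sum>i\<in>{i. f i \<noteq> 0}. f i) = 0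
          \<longrightarrow> (\<forall>i. f i = 0))"

definition homog :: "(int \<Rightarrow> 'a set) \<Rightarrow> int list \<Rightarrow> 'a list \<Rightarrow> bool" where
  "homog G ds xs \<longleftrightarrow> length ds = length xs \<and> (\<forall>j<length xs. xs ! j \<in> G (ds ! j))"

definition sgnp :: "int \<Rightarrow> 'c::ab_group_add \<Rightarrow> 'c" where
  "sgnp e x = (if even e then x else - x)"

text \<open>The left-hand side of the k-th A-infinity relation (k = length xs), for an
  operation m acting on argument lists (the arity being the length of the list),
  where the result is read through the map proj.\<close>
definition ainf_sum :: "('b list \<Rightarrow> 'b) \<Rightarrow> ('b \<Rightarrow> 'c::ab_group_add) \<Rightarrow> int list \<Rightarrow> 'b list \<Rightarrow> 'c" where
  "ainf_sum m proj ds xs =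
     (\<Sum>n\<in>{1..length xs}. \<Sum>i\<in>{1..length xs + 1 - n}.
        sgnp (int i * (int n + 1) + int n * sum_list (take (i - 1) ds))
          (proj (m (take (i - 1) xs @ [m (take n (drop (i - 1) xs))] @ drop (i - 1 + n) xs))))"

text \<open>mu xs is mu_n(x_1,...,x_n) with n = length xs (only n \<ge> 1 is relevant).\<close>
definition ainf_algebra ::
  "('k::field \<Rightarrow> 'a::ab_group_add \<Rightarrow> 'a) \<Rightarrow> (int \<Rightarrow> 'a set) \<Rightarrow> ('a list \<Rightarrow> 'a) \<Rightarrow> bool" where
  "ainf_algebra s G mu \<longleftrightarrow>
     graded_vs s G \<and>
     (\<forall>pre post. Vector_Spaces.linear s s (\<lambda>x. mu (pre @ [x] @ post))) \<and>
     (\<forall>ds xs. homog G ds xs \<and> xs \<noteq> [] \<longrightarrow> mu xs \<in> G (sum_list ds + int (length xs) - 2)) \<and>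
     (\<forall>ds xs. homog G ds xs \<and> xs \<noteq> [] \<longrightarrow> ainf_sum mu id ds xs = 0)"

definition isR :: "'a + 'm \<Rightarrow> bool" where "isR = case_sum (\<lambda>_. False) (\<lambda>_. True)"
definition prL :: "'a::zero + 'm \<Rightarrow> 'a" where "prL = case_sum id (\<lambda>_. 0)"
definition prR :: "'a + 'm::zero \<Rightarrow> 'm" where "prR = case_sum (\<lambda>_. 0) id"

text \<open>nu pre u post is nu_n(a_1,...,a_{r-1},u,a_{r+1},...,a_n) with pre = [a_1..a_{r-1}],
  post = [a_{r+1}..a_n].  The combined operation on lists of elements of A or M:
  mu if no argument lies in M, nu if (exactly) one argument lies in M.\<close>
definition mixop :: "('a::zero list \<Rightarrow> 'a) \<Rightarrow> ('a list \<Rightarrow> 'm::zero \<Rightarrow> 'a list \<Rightarrow> 'm)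
    \<Rightarrow> ('a + 'm) list \<Rightarrow> 'a + 'm" where
  "mixop mu nu xs =
     (let P = filter (\<lambda>i. isR (xs ! i)) [0..<length xs] in
      if P = [] then Inl (mu (map prL xs))
      else Inr (nu (map prL (take (hd P) xs)) (prR (xs ! hd P)) (map prL (drop (Suc (hd P)) xs))))"

definition homog_mix :: "(int \<Rightarrow> 'a set) \<Rightarrow> (int \<Rightarrow> 'm set) \<Rightarrow> int list \<Rightarrow> ('a + 'm) list \<Rightarrow> bool" where
  "homog_mix GA GM ds xs \<longleftrightarrow> length ds = length xs \<and>
     (\<forall>j<length xs. case xs ! j of Inl a \<Rightarrow> a \<in> GA (ds ! j) | Inr u \<Rightarrow> u \<in> GM (ds ! j))"

definition ainf_rep ::
  "('k::field \<Rightarrow> 'a::ab_group_add \<Rightarrow> 'a) \<Rightarrow> (int \<Rightarrow> 'a set) \<Rightarrow> ('a list \<Rightarrow> 'a) \<Rightarrow>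
   ('k \<Rightarrow> 'm::ab_group_add \<Rightarrow> 'm) \<Rightarrow> (int \<Rightarrow> 'm set) \<Rightarrow> ('a list \<Rightarrow> 'm \<Rightarrow> 'a list \<Rightarrow> 'm) \<Rightarrow> bool" where
  "ainf_rep sA GA mu sM GM nu \<longleftrightarrow>
     graded_vs sM GM \<and>
     (\<forall>pre post. Vector_Spaces.linear sM sM (\<lambda>v. nu pre v post)) \<and>
     (\<forall>pre1 pre2 u post. Vector_Spaces.linear sA sM (\<lambda>x. nu (pre1 @ [x] @ pre2) u post)) \<and>
     (\<forall>pre u post1 post2. Vector_Spaces.linear sA sM (\<lambda>x. nu pre u (post1 @ [x] @ post2))) \<and>
     (\<forall>ds1 pre d u ds2 post. homog GA ds1 pre \<and> u \<in> GM d \<and> homog GA ds2 post \<longrightarrow>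
        nu pre u post \<in> GM (sum_list ds1 + d + sum_list ds2 + int (length pre + 1 + length post) - 2)) \<and>
     (\<forall>ds xs. homog_mix GA GM ds xs \<and> length (filter isR xs) = 1 \<longrightarrow>
        ainf_sum (mixop mu nu) prR ds xs = 0)"

definition sd_scale :: "('k \<Rightarrow> 'a \<Rightarrow> 'a) \<Rightarrow> ('k \<Rightarrow> 'm \<Rightarrow> 'm) \<Rightarrow> 'k \<Rightarrow> 'a \<times> 'm \<Rightarrow> 'a \<times> 'm" where
  "sd_scale sA sM c p = (sA c (fst p), sM c (snd p))"

definition sd_grading :: "(int \<Rightarrow> 'a set) \<Rightarrow> (int \<Rightarrow> 'm set) \<Rightarrow> int \<Rightarrow> ('a \<times> 'm) set" where
  "sd_grading GA GM i = GA i \<times> GM i"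

definition sd_mu :: "('a list \<Rightarrow> 'a) \<Rightarrow> ('a list \<Rightarrow> 'm::comm_monoid_add \<Rightarrow> 'a list \<Rightarrow> 'm)
   \<Rightarrow> ('a \<times> 'm) list \<Rightarrow> 'a \<times> 'm" where
  "sd_mu mu nu xs = (mu (map fst xs),
     (\<Sum>r<length xs. nu (map fst (take r xs)) (snd (xs ! r)) (map fst (drop (Suc r) xs))))"

definition degree0_linear :: "('k::field \<Rightarrow> 'b::ab_group_add \<Rightarrow> 'b) \<Rightarrow> (int \<Rightarrow> 'b set) \<Rightarrow> ('k \<Rightarrow> 'c::ab_group_add \<Rightarrow> 'c) \<Rightarrow> (int \<Rightarrow> 'c set)
   \<Rightarrow> ('b \<Rightarrow> 'c) \<Rightarrow> bool" where
  "degree0_linear s1 G1 s2 G2 f \<longleftrightarrow> Vector_Spaces.linear s1 s2 f \<and> (\<forall>i. f ` G1 i \<subseteq> G2 i)"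

definition strict_rel_RB ::
  "('k::field \<Rightarrow> 'a::ab_group_add \<Rightarrow> 'a) \<Rightarrow> (int \<Rightarrow> 'a set) \<Rightarrow> ('a list \<Rightarrow> 'a) \<Rightarrow>
   ('k \<Rightarrow> 'm::ab_group_add \<Rightarrow> 'm) \<Rightarrow> (int \<Rightarrow> 'm set) \<Rightarrow> ('a list \<Rightarrow> 'm \<Rightarrow> 'a list \<Rightarrow> 'm) \<Rightarrow>
   ('m \<Rightarrow> 'a) \<Rightarrow> bool" where
  "strict_rel_RB sA GA mu sM GM nu R \<longleftrightarrow>
     degree0_linear sM GM sA GA R \<and>
     (\<forall>ds us. homog GM ds us \<and> us \<noteq> [] \<longrightarrow>
        mu (map R us) =
        (\<Sum>r<length us. R (nu (map R (take r us)) (us ! r) (map R (drop (Suc r) us)))))"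

definition strict_nijenhuis ::
  "('k::field \<Rightarrow> 'b::ab_group_add \<Rightarrow> 'b) \<Rightarrow> (int \<Rightarrow> 'b set) \<Rightarrow> ('b list \<Rightarrow> 'b) \<Rightarrow> ('b \<Rightarrow> 'b) \<Rightarrow> bool" where
  "strict_nijenhuis s G m N \<longleftrightarrow>
     degree0_linear s G s G N \<and>
     (\<forall>ds bs. homog G ds bs \<and> bs \<noteq> [] \<longrightarrow>
        m (map N bs) =
        (\<Sum>k\<in>{1..length bs}. sgnp (int k - 1) ((N ^^ k)
            (\<Sum>S\<in>{S. S \<subseteq> {..<length bs} \<and> card S = k}.
               m (map (\<lambda>i. if i \<in> S then bs ! i else N (bs ! i)) [0..<length bs])))))"

end

theory Submission
  imports Defs
begin

text \<open>The lift \<open>N(a, u) = (R u, 0)\<close> squares to zero, so in the Nijenhuis identity only the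
  term \<open>k = 1\<close> survives.  Applying \<open>N\<close> to all arguments of the semidirect product operation
  except the \<open>j\<close>-th leaves the single \<open>M\<close>-component \<open>\<nu>(R u\<^sub>1, \<dots>, u\<^sub>j, \<dots>, R u\<^sub>n)\<close>, while
  applying it to all arguments gives \<open>(\<mu>(R u\<^sub>1, \<dots>, R u\<^sub>n), 0)\<close>.  Hence the Nijenhuis identity
  for \<open>(a\<^sub>i, u\<^sub>i)\<close> is literally the Rota-Baxter identity for \<open>(u\<^sub>i)\<close>.\<close>

definition rb_lift :: "('m \<Rightarrow> 'a::zero) \<Rightarrow> 'a \<times> 'm \<Rightarrow> 'a \<times> 'm::zero" where
  "rb_lift R = (\<lambda>(a, u). (R u, 0))"

lemma rb_lift_apply [simp]: "rb_lift R (a, u) = (R u, 0)"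
  by (simp add: rb_lift_def)

lemma funpow_rb_lift_eq_zero:
  assumes "R 0 = 0" and "2 \<le> k"
  shows "(rb_lift R ^^ k) x = 0"
proof -
  obtain j where "k = Suc (Suc j)"
    using \<open>2 \<le> k\<close> by (metis add_2_eq_Suc le_Suc_ex)
  then show ?thesis
    using \<open>R 0 = 0\<close> by (simp add: rb_lift_def split_beta zero_prod_def)
qed

definition rb_identity ::
  "('a list \<Rightarrow> 'a) \<Rightarrow> ('a list \<Rightarrow> 'm \<Rightarrow> 'a list \<Rightarrow> 'm) \<Rightarrow> ('m \<Rightarrow> 'a::comm_monoid_add) \<Rightarrow> 'm list \<Rightarrow> bool"
where
  "rb_identity mu nu R us \<longleftrightarrow>
     mu (map R us) = (\<Sum>r<length us. R (nu (map R (take r us)) (us ! r) (map R (drop (Suc r) us))))"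

definition nijenhuis_identity :: "('b list \<Rightarrow> 'b) \<Rightarrow> ('b \<Rightarrow> 'b::ab_group_add) \<Rightarrow> 'b list \<Rightarrow> bool" where
  "nijenhuis_identity m N bs \<longleftrightarrow>
     m (map N bs) =
     (\<Sum>k\<in>{1..length bs}. sgnp (int k - 1) ((N ^^ k)
        (\<Sum>S\<in>{S. S \<subseteq> {..<length bs} \<and> card S = k}.
           m (map (\<lambda>i. if i \<in> S then bs ! i else N (bs ! i)) [0..<length bs]))))"

lemma strict_rel_RB_iff:
  "strict_rel_RB sA GA mu sM GM nu R \<longleftrightarrow>
     degree0_linear sM GM sA GA R \<and>
     (\<forall>ds us. homog GM ds us \<and> us \<noteq> [] \<longrightarrow> rb_identity mu nu R us)"
  by (simp add: strict_rel_RB_def rb_identity_def)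

lemma strict_nijenhuis_iff:
  "strict_nijenhuis s G m N \<longleftrightarrow>
     degree0_linear s G s G N \<and> (\<forall>ds bs. homog G ds bs \<and> bs \<noteq> [] \<longrightarrow> nijenhuis_identity m N bs)"
  by (simp add: strict_nijenhuis_def nijenhuis_identity_def)

lemma homog_sd_grading_iff:
  "homog (sd_grading GA GM) ds bs \<longleftrightarrow> homog GA ds (map fst bs) \<and> homog GM ds (map snd bs)"
  by (auto simp: homog_def sd_grading_def mem_Times_iff)

lemma vector_space_sd_scale:
  assumes "Vector_Spaces.vector_space sA" and "Vector_Spaces.vector_space sM"
  shows "Vector_Spaces.vector_space (sd_scale sA sM)"
  using assms unfolding vector_space_def sd_scale_def by (auto simp: prod_eq_iff)

lemma linear_rb_lift:
  assumes "Vector_Spaces.linear sM sA R"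
  shows "Vector_Spaces.linear (sd_scale sA sM) (sd_scale sA sM) (rb_lift R)"
proof -
  have vs: "Vector_Spaces.vector_space sM" "Vector_Spaces.vector_space sA"
    using assms by (auto simp: Vector_Spaces.linear_def)
  have hom: "module_hom sM sA R"
    using assms by (simp add: linear_iff_module_hom)
  have "sM c 0 = 0" for c
    using vs(1) by (simp add: module.scale_zero_right module_iff_vector_space)
  then show ?thesis
    unfolding Vector_Spaces.linear_def
    using vector_space_sd_scale[OF vs(2,1)]
    by (auto simp: module_hom_def module_hom_axioms_def module_iff_vector_space sd_scale_def
        rb_lift_def split_beta module_hom.add[OF hom] module_hom.scale[OF hom])
qed

lemma degree0_linear_rb_lift:
  assumes "degree0_linear sM GM sA GA R" and "\<And>i. 0 \<in> GM i"
  shows "degree0_linear (sd_scale sA sM) (sd_grading GA GM) (sd_scale sA sM) (sd_grading GA GM)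
           (rb_lift R)"
  using assms linear_rb_lift[of sM sA R]
  by (auto simp: degree0_linear_def sd_grading_def image_subset_iff)

lemma sum_card_one_subsets:
  "(\<Sum>S\<in>{S. S \<subseteq> {..<n} \<and> card S = 1}. f S) = (\<Sum>j<n. f {j})"
proof -
  have "{S. S \<subseteq> {..<n} \<and> card S = 1} = (\<lambda>j. {j}) ` {..<n}"
    by (auto simp: card_Suc_eq)
  then show ?thesis
    by (simp add: sum.reindex)
qed

lemma sd_mu_map_rb_lift:
  assumes "\<And>pre post. nu pre 0 post = 0"
  shows "sd_mu mu nu (map (rb_lift R) bs) = (mu (map R (map snd bs)), 0)"
  using assms by (simp add: sd_mu_def rb_lift_def split_beta comp_def)

lemma snd_sd_mu_rb_lift_except:
  assumes nu0: "\<And>pre post. nu pre 0 post = 0" and j: "j < length bs"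
  shows "snd (sd_mu mu nu (map (\<lambda>i. if i = j then bs ! i else rb_lift R (bs ! i)) [0..<length bs]))
           = nu (map R (take j (map snd bs))) (snd (bs ! j)) (map R (drop (Suc j) (map snd bs)))"
    (is "snd (sd_mu mu nu ?xs) = ?nu_j")
proof -
  have "nu (map fst (take r ?xs)) (snd (?xs ! r)) (map fst (drop (Suc r) ?xs))
          = (if r = j then ?nu_j else 0)" if "r < length bs" for r
  proof (cases "r = j")
    case True
    have "map fst (take r ?xs) = map R (take j (map snd bs))"
      by (rule nth_equalityI) (use True j in \<open>auto simp: rb_lift_def split_beta\<close>)
    moreover have "map fst (drop (Suc r) ?xs) = map R (drop (Suc j) (map snd bs))"
      by (rule nth_equalityI) (use True j in \<open>auto simp: rb_lift_def split_beta\<close>)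
    ultimately show ?thesis
      using True j by simp
  next
    case False
    then show ?thesis
      using that nu0 by (simp add: rb_lift_def split_beta)
  qed
  then have "snd (sd_mu mu nu ?xs) = (\<Sum>r<length bs. if r = j then ?nu_j else 0)"
    by (simp add: sd_mu_def)
  also have "\<dots> = ?nu_j"
    using j by simp
  finally show ?thesis .
qed

lemma nijenhuis_sum_rb_lift:
  assumes nu0: "\<And>pre post. nu pre 0 post = 0" and R: "Vector_Spaces.linear sM sA R"
  shows "(\<Sum>k\<in>{1..length bs}. sgnp (int k - 1) ((rb_lift R ^^ k)
            (\<Sum>S\<in>{S. S \<subseteq> {..<length bs} \<and> card S = k}.
               sd_mu mu nu (map (\<lambda>i. if i \<in> S then bs ! i else rb_lift R (bs ! i)) [0..<length bs]))))
         = (\<Sum>r<length bs.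
              R (nu (map R (take r (map snd bs))) (snd (bs ! r)) (map R (drop (Suc r) (map snd bs)))), 0)"
    (is "(\<Sum>k\<in>{1..length bs}. ?T k) = _")
proof -
  have R0: "R 0 = 0" and R_sum: "\<And>f A. R (sum f A) = (\<Sum>x\<in>A. R (f x))"
    using R by (simp_all add: linear_iff_module_hom module_hom.zero module_hom.sum)
  have "?T k = 0" if "k \<in> {1..length bs} - {1}" for k
    using that funpow_rb_lift_eq_zero[of R k, OF R0] by (simp add: sgnp_def)
  then have "(\<Sum>k\<in>{1..length bs}. ?T k) = (\<Sum>k\<in>{1..length bs} \<inter> {1}. ?T k)"
    by (intro sum.mono_neutral_right) auto
  also have "\<dots> = (if bs = [] then 0 else ?T 1)"
    by (cases bs) auto
  also have "?T 1 = rb_lift R (\<Sum>j<length bs.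
      sd_mu mu nu (map (\<lambda>i. if i = j then bs ! i else rb_lift R (bs ! i)) [0..<length bs]))"
    unfolding sum_card_one_subsets by (simp add: sgnp_def)
  also have "\<dots> = (\<Sum>r<length bs.
      R (nu (map R (take r (map snd bs))) (snd (bs ! r)) (map R (drop (Suc r) (map snd bs)))), 0)"
    by (simp add: rb_lift_def split_beta snd_sum R_sum snd_sd_mu_rb_lift_except[of nu, OF nu0])
  finally show ?thesis
    by (simp add: R0 zero_prod_def)
qed

lemma nijenhuis_identity_rb_lift_iff:
  assumes "\<And>pre post. nu pre 0 post = 0" and "Vector_Spaces.linear sM sA R"
  shows "nijenhuis_identity (sd_mu mu nu) (rb_lift R) bs \<longleftrightarrow> rb_identity mu nu R (map snd bs)"
  unfolding nijenhuis_identity_def rb_identity_def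
    nijenhuis_sum_rb_lift[of nu, OF assms] sd_mu_map_rb_lift[of nu, OF assms(1)]
  by simp

lemma all_homog_sd_grading_iff:
  assumes "\<And>i. 0 \<in> GA i"
  shows "(\<forall>ds bs. homog (sd_grading GA GM) ds bs \<and> bs \<noteq> [] \<longrightarrow> P (map snd bs)) \<longleftrightarrow>
         (\<forall>ds us. homog GM ds us \<and> us \<noteq> [] \<longrightarrow> P us)"
proof (intro iffI allI impI)
  fix ds us
  assume all: "\<forall>ds bs. homog (sd_grading GA GM) ds bs \<and> bs \<noteq> [] \<longrightarrow> P (map snd bs)"
    and us: "homog GM ds us \<and> us \<noteq> []"
  have "homog (sd_grading GA GM) ds (map (Pair 0) us) \<and> map (Pair 0) us \<noteq> []"
    (is "homog _ _ ?bs \<and> _")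
    using assms us by (auto simp: homog_def sd_grading_def)
  then have "P (map snd ?bs)"
    by (rule all[rule_format])
  then show "P us"
    by (simp add: comp_def)
qed (auto simp: homog_sd_grading_iff)

lemma ainf_rep_nu_zero:
  assumes "ainf_rep sA GA mu sM GM nu"
  shows "nu pre 0 post = 0"
proof -
  have "Vector_Spaces.linear sM sM (\<lambda>v. nu pre v post)"
    using assms by (simp add: ainf_rep_def)
  then have "module_hom sM sM (\<lambda>v. nu pre v post)"
    by (simp add: linear_iff_module_hom)
  from module_hom.zero[OF this] show ?thesis
    by simp
qed

theorem proposition6p11:
  fixes sA :: "'k::field_char_0 \<Rightarrow> 'a::ab_group_add \<Rightarrow> 'a"
    and GA :: "int \<Rightarrow> 'a set"
    and mu :: "'a list \<Rightarrow> 'a"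
    and sM :: "'k \<Rightarrow> 'm::ab_group_add \<Rightarrow> 'm"
    and GM :: "int \<Rightarrow> 'm set"
    and nu :: "'a list \<Rightarrow> 'm \<Rightarrow> 'a list \<Rightarrow> 'm"
    and R :: "'m \<Rightarrow> 'a"
  assumes "ainf_algebra sA GA mu"
    and "ainf_rep sA GA mu sM GM nu"
    and "degree0_linear sM GM sA GA R"
  shows "strict_rel_RB sA GA mu sM GM nu R \<longleftrightarrow>
         strict_nijenhuis (sd_scale sA sM) (sd_grading GA GM) (sd_mu mu nu)
           (\<lambda>(a, u). (R u, 0))"
proof -
  have GA0: "\<And>i. 0 \<in> GA i" and GM0: "\<And>i. 0 \<in> GM i"
    using assms(1,2) by (auto simp: ainf_algebra_def ainf_rep_def graded_vs_def)
  have R: "Vector_Spaces.linear sM sA R"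
    using assms(3) by (simp add: degree0_linear_def)
  show ?thesis
    unfolding rb_lift_def[symmetric] strict_rel_RB_iff strict_nijenhuis_iff
      nijenhuis_identity_rb_lift_iff[of nu, OF ainf_rep_nu_zero[OF assms(2)] R]
      all_homog_sd_grading_iff[where P = "rb_identity mu nu R", OF GA0]
    using assms(3) degree0_linear_rb_lift[OF assms(3) GM0] by blast
qed

end
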